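(* (1) If $A,B\in\mathcal A_n$ with $A\le B$ in ASM order, then there is a directed path $A=A_0\to A_1\to\cdots\to A_k=B$ in the ASM graph with $\beta(A_i)-\beta(A_{i-1})=1$ for all $i$. (2) For every $A\in\mathcal A_n$, $\beta(A)=\#\{B\in\mathcal A_n : B\le A \text{ and } B \text{ is a bigrassmannian permutation}\}$.
   Context: An $n\times n$ matrix $A=(a_{ij})$ is an alternating sign matrix (ASM) if all $a_{ij}\in\{-1,0,1\}$, all partial row and column sums lie in $\{0,1\}$, and all full row and column sums equal $1$; $\mathcal A_n$ is the set of these, and permutations are identified with permutation matrices. Corner sum matrix $\widetilde A(i,j)=\sum_{p\le i,q\le j}a_{pq}$ ($=0$ if $i=0$ or $j=0$). ASM order: $A\le B$ iff $\widetilde A(i,j)\ge\widetilde B(i,j)$ for all $i,j$. Bigrassmannian statistic: $\beta(A)=\sum_{i,j=1}^n\min(i,j)-\sum_{i,j=1}^n\widetilde A(i,j)$. A permutation $w$ is bigrassmannian if there is exactly one $i\in[n-1]$ with $w^{-1}(i)>w^{-1}(i+1)$ and exactly one $j\in[n-1]$ with $w(j)>w(j+1)$. For $i<j$, $k<l$, $R_{ij}^{kl}=\{(p,q): i\le p<j,\ k\le q<l\}$, $\widetilde R_{ij}^{kl}$ its $0/1$ indicator matrix; $E(A)$: rectangles with, for all $(p,q)\in R_{ij}^{kl}$, $\widetilde A(p,k)=\widetilde A(p,k-1)$, $\widetilde A(p,l)=\widetilde A(p,l-1)+1$, $\widetilde A(i,q)=\widetilde A(i-1,q)$, $\widetilde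 A(j,q)=\widetilde A(j-1,q)+1$; $E^*(A)$: rectangles with $\widetilde A(p,k)=\widetilde A(p,k-1)+1$, $\widetilde A(p,l)=\widetilde A(p,l-1)$, $\widetilde A(i,q)=\widetilde A(i-1,q)+1$, $\widetilde A(j,q)=\widetilde A(j-1,q)$. $r_{ij}^{kl}(A)$ is the ASM with corner sum matrix $\widetilde A+\widetilde R_{ij}^{kl}$ if $R_{ij}^{kl}\in E(A)$, $\widetilde A-\widetilde R_{ij}^{kl}$ if $R_{ij}^{kl}\in E^*(A)$, $\widetilde A$ otherwise. ASM graph edge $A\to B$: $B=r_{ij}^{kl}(A)$ for some $i<j$, $k<l$, and $\beta(A)<\beta(B)$. *)

theory Defs
  imports Main "HOL-Combinatorics.Permutations"
begin

text \<open>Matrices are functions nat => nat => int, indexed by 1..n, zero elsewhere.\<close>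

definition csum :: "(nat \<Rightarrow> nat \<Rightarrow> int) \<Rightarrow> nat \<Rightarrow> nat \<Rightarrow> int" where
  "csum A i j = (\<Sum>p=1..i. \<Sum>q=1..j. A p q)"

definition is_asm :: "nat \<Rightarrow> (nat \<Rightarrow> nat \<Rightarrow> int) \<Rightarrow> bool" where
  "is_asm n A \<longleftrightarrow>
     (\<forall>i j. \<not> (1 \<le> i \<and> i \<le> n \<and> 1 \<le> j \<and> j \<le> n) \<longrightarrow> A i j = 0) \<and>
     (\<forall>i\<in>{1..n}. \<forall>j\<in>{1..n}. A i j \<in> {-1, 0, 1}) \<and>
     (\<forall>i\<in>{1..n}. \<forall>j\<in>{1..n}. (\<Sum>q=1..j. A i q) \<in> {0, 1}) \<and>
     (\<forall>i\<in>{1..n}. \<forall>j\<in>{1..n}. (\<Sum>p=1..i. A p j) \<in> {0, 1}) \<and>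
     (\<forall>i\<in>{1..n}. (\<Sum>q=1..n. A i q) = 1) \<and>
     (\<forall>j\<in>{1..n}. (\<Sum>p=1..n. A p j) = 1)"

definition asm_le :: "nat \<Rightarrow> (nat \<Rightarrow> nat \<Rightarrow> int) \<Rightarrow> (nat \<Rightarrow> nat \<Rightarrow> int) \<Rightarrow> bool" where
  "asm_le n A B \<longleftrightarrow> (\<forall>i\<in>{0..n}. \<forall>j\<in>{0..n}. csum A i j \<ge> csum B i j)"

definition beta :: "nat \<Rightarrow> (nat \<Rightarrow> nat \<Rightarrow> int) \<Rightarrow> int" where
  "beta n A = (\<Sum>i=1..n. \<Sum>j=1..n. int (min i j)) - (\<Sum>i=1..n. \<Sum>j=1..n. csum A i j)"

definition perm_matrix :: "nat \<Rightarrow> (nat \<Rightarrow> nat) \<Rightarrow> nat \<Rightarrow> nat \<Rightarrow> int" where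
  "perm_matrix n w = (\<lambda>i j. if i \<in> {1..n} \<and> j \<in> {1..n} \<and> w i = j then 1 else 0)"

definition bigrassmannian :: "nat \<Rightarrow> (nat \<Rightarrow> nat) \<Rightarrow> bool" where
  "bigrassmannian n w \<longleftrightarrow>
     card {i\<in>{1..n-1}. inv w i > inv w (i+1)} = 1 \<and>
     card {j\<in>{1..n-1}. w j > w (j+1)} = 1"

definition is_bigrass_perm_matrix :: "nat \<Rightarrow> (nat \<Rightarrow> nat \<Rightarrow> int) \<Rightarrow> bool" where
  "is_bigrass_perm_matrix n B \<longleftrightarrow>
     (\<exists>w. w permutes {1..n} \<and> bigrassmannian n w \<and> B = perm_matrix n w)"

definition rect :: "nat \<Rightarrow> nat \<Rightarrow> nat \<Rightarrow> nat \<Rightarrow> nat \<Rightarrow> nat \<Rightarrow> int" where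
  "rect i j k l p q = (if i \<le> p \<and> p < j \<and> k \<le> q \<and> q < l then 1 else 0)"

definition in_E :: "(nat \<Rightarrow> nat \<Rightarrow> int) \<Rightarrow> nat \<Rightarrow> nat \<Rightarrow> nat \<Rightarrow> nat \<Rightarrow> bool" where
  "in_E A i j k l \<longleftrightarrow>
     (\<forall>p\<in>{i..<j}. csum A p k = csum A p (k-1) \<and> csum A p l = csum A p (l-1) + 1) \<and>
     (\<forall>q\<in>{k..<l}. csum A i q = csum A (i-1) q \<and> csum A j q = csum A (j-1) q + 1)"

definition in_Estar :: "(nat \<Rightarrow> nat \<Rightarrow> int) \<Rightarrow> nat \<Rightarrow> nat \<Rightarrow> nat \<Rightarrow> nat \<Rightarrow> bool" where
  "in_Estar A i j k l \<longleftrightarrow>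
     (\<forall>p\<in>{i..<j}. csum A p k = csum A p (k-1) + 1 \<and> csum A p l = csum A p (l-1)) \<and>
     (\<forall>q\<in>{k..<l}. csum A i q = csum A (i-1) q + 1 \<and> csum A j q = csum A (j-1) q)"

text \<open>The n x n matrix whose corner sum matrix is C (inclusion-exclusion).\<close>
definition from_csum :: "nat \<Rightarrow> (nat \<Rightarrow> nat \<Rightarrow> int) \<Rightarrow> nat \<Rightarrow> nat \<Rightarrow> int" where
  "from_csum n C = (\<lambda>p q. if p \<in> {1..n} \<and> q \<in> {1..n}
      then C p q - C (p-1) q - C p (q-1) + C (p-1) (q-1) else 0)"

definition r_move :: "nat \<Rightarrow> nat \<Rightarrow> nat \<Rightarrow> nat \<Rightarrow> nat \<Rightarrow> (nat \<Rightarrow> nat \<Rightarrow> int) \<Rightarrow> nat \<Rightarrow> nat \<Rightarrow> int" where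
  "r_move n i j k l A =
     (if in_E A i j k l then from_csum n (\<lambda>p q. csum A p q + rect i j k l p q)
      else if in_Estar A i j k l then from_csum n (\<lambda>p q. csum A p q - rect i j k l p q)
      else A)"

definition asm_edge :: "nat \<Rightarrow> (nat \<Rightarrow> nat \<Rightarrow> int) \<Rightarrow> (nat \<Rightarrow> nat \<Rightarrow> int) \<Rightarrow> bool" where
  "asm_edge n A B \<longleftrightarrow> is_asm n A \<and> is_asm n B \<and>
     (\<exists>i j k l. 1 \<le> i \<and> i < j \<and> j \<le> n \<and> 1 \<le> k \<and> k < l \<and> l \<le> n \<and>
        B = r_move n i j k l A) \<and> beta n A < beta n B"

end

theory Submission
  imports Defs
begin

text \<open>Corner sum matrices of ASMs are exactly the integer matrices with boundary values
  \<open>C(0,j) = C(j,0) = 0\<close>, \<open>C(n,j) = C(j,n) = j\<close> whose horizontal and vertical steps all lie in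
  \<open>{0, 1}\<close>. If \<open>A < B\<close>, then among the cells where the corner sum of \<open>B\<close> is smaller than that
  of \<open>A\<close>, one maximising \<open>2 C\<^sub>A(x,y) - x - y\<close> carries a unit square of \<open>E*(A)\<close>; lowering
  \<open>C\<^sub>A\<close> there is an edge of the ASM graph raising \<open>\<beta>\<close> by one and staying below \<open>B\<close>, so
  induction on \<open>\<beta>(B) - \<beta>(A)\<close> yields the path.

  A bigrassmannian permutation is determined by its descent \<open>p\<close>, the descent \<open>q\<close> of its
  inverse and its number \<open>c\<close> of initial fixed points; its corner sum matrix is
  \<open>min(x, y, c + (x - p)\<^sup>+ + (y - q)\<^sup>+)\<close>, which makes it lie below \<open>A\<close> iff \<open>C\<^sub>A(p,q) \<le> c\<close>.
  Hence each cell \<open>(p,q)\<close> contributes \<open>min(p,q) - C\<^sub>A(p,q)\<close> of them, and these sum to \<open>\<beta>(A)\<close>.\<close>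

lemma csum_0_left [simp]: "csum A 0 j = 0"
  by (simp add: csum_def)

lemma csum_0_right [simp]: "csum A i 0 = 0"
  by (simp add: csum_def)

lemma csum_Suc_row: "csum A (Suc i) j = csum A i j + (\<Sum>q=1..j. A (Suc i) q)"
  by (simp add: csum_def sum.cl_ivl_Suc)

lemma csum_Suc_col: "csum A i (Suc j) = csum A i j + (\<Sum>p=1..i. A p (Suc j))"
  by (simp add: csum_def sum.cl_ivl_Suc sum.distrib)

definition is_corner_sum :: "nat \<Rightarrow> (nat \<Rightarrow> nat \<Rightarrow> int) \<Rightarrow> bool" where
  "is_corner_sum n C \<longleftrightarrow>
     (\<forall>j\<le>n. C 0 j = 0 \<and> C j 0 = 0 \<and> C n j = int j \<and> C j n = int j) \<and>
     (\<forall>i<n. \<forall>j\<le>n. C (Suc i) j - C i j \<in> {0, 1}) \<and>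
     (\<forall>i\<le>n. \<forall>j<n. C i (Suc j) - C i j \<in> {0, 1})"

lemma is_corner_sum_boundary:
  assumes "is_corner_sum n C" "j \<le> n"
  shows "C 0 j = 0" "C j 0 = 0" "C n j = int j" "C j n = int j"
  using assms by (simp_all add: is_corner_sum_def)

lemma is_corner_sum_row_step:
  "is_corner_sum n C \<Longrightarrow> i < n \<Longrightarrow> j \<le> n \<Longrightarrow> C (Suc i) j - C i j \<in> {0, 1}"
  by (simp add: is_corner_sum_def)

lemma is_corner_sum_col_step:
  "is_corner_sum n C \<Longrightarrow> i \<le> n \<Longrightarrow> j < n \<Longrightarrow> C i (Suc j) - C i j \<in> {0, 1}"
  by (simp add: is_corner_sum_def)

lemma asm_outside_zero:
  "is_asm n A \<Longrightarrow> \<not> (1 \<le> i \<and> i \<le> n \<and> 1 \<le> j \<and> j \<le> n) \<Longrightarrow> A i j = 0"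
  by (simp add: is_asm_def)

lemma csum_asm_last_row:
  assumes "is_asm n A" "j \<le> n"
  shows "csum A n j = int j"
proof -
  have "csum A n j = (\<Sum>q=1..j. \<Sum>p=1..n. A p q)"
    unfolding csum_def by (rule sum.swap)
  also have "\<dots> = (\<Sum>q=1..j. 1)"
    using assms by (intro sum.cong) (auto simp: is_asm_def)
  finally show ?thesis by simp
qed

lemma csum_asm_last_col:
  assumes "is_asm n A" "i \<le> n"
  shows "csum A i n = int i"
proof -
  have "csum A i n = (\<Sum>p=1..i. 1)"
    unfolding csum_def using assms by (intro sum.cong) (auto simp: is_asm_def)
  then show ?thesis by simp
qed

lemma is_corner_sum_csum:
  assumes "is_asm n A"
  shows "is_corner_sum n (csum A)"
  unfolding is_corner_sum_def
proof (intro conjI allI impI)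
  fix j assume "j \<le> n"
  then show "csum A 0 j = 0" "csum A j 0 = 0" "csum A n j = int j" "csum A j n = int j"
    using csum_asm_last_row csum_asm_last_col assms by auto
next
  fix i j assume "i < n" "j \<le> n"
  then show "csum A (Suc i) j - csum A i j \<in> {0, 1}"
    using assms by (cases "j = 0") (auto simp: csum_Suc_row is_asm_def)
next
  fix i j assume "i \<le> n" "j < n"
  then show "csum A i (Suc j) - csum A i j \<in> {0, 1}"
    using assms by (cases "i = 0") (auto simp: csum_Suc_col is_asm_def)
qed

lemma from_csum_row_sum:
  assumes "1 \<le> i" "i \<le> n" "j \<le> n"
  shows "(\<Sum>q=1..j. from_csum n C i q) = (C i j - C (i-1) j) - (C i 0 - C (i-1) 0)"
proof -
  have "(\<Sum>q=1..j. from_csum n C i q)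
      = (\<Sum>q\<in>{Suc 0..j}. (C i q - C (i-1) q) - (C i (q-1) - C (i-1) (q-1)))"
    using assms by (intro sum.cong) (auto simp: from_csum_def)
  then show ?thesis
    using sum_telescope''[of 0 j "\<lambda>q. C i q - C (i-1) q"] by simp
qed

lemma from_csum_col_sum:
  assumes "1 \<le> j" "i \<le> n" "j \<le> n"
  shows "(\<Sum>p=1..i. from_csum n C p j) = (C i j - C i (j-1)) - (C 0 j - C 0 (j-1))"
proof -
  have "(\<Sum>p=1..i. from_csum n C p j)
      = (\<Sum>p\<in>{Suc 0..i}. (C p j - C p (j-1)) - (C (p-1) j - C (p-1) (j-1)))"
    using assms by (intro sum.cong) (auto simp: from_csum_def)
  then show ?thesis
    using sum_telescope''[of 0 i "\<lambda>p. C p j - C p (j-1)"] by simp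
qed

lemma csum_from_csum:
  assumes "is_corner_sum n C" "x \<le> n" "y \<le> n"
  shows "csum (from_csum n C) x y = C x y"
  using assms(2)
proof (induction x)
  case 0
  then show ?case using is_corner_sum_boundary[OF assms(1,3)] by simp
next
  case (Suc x)
  then show ?case
    using from_csum_row_sum[of "Suc x" n y C] is_corner_sum_boundary[OF assms(1)] assms(3)
    by (simp add: csum_Suc_row)
qed

lemma is_asm_from_csum:
  assumes C: "is_corner_sum n C"
  shows "is_asm n (from_csum n C)"
proof -
  have row: "C i j - C (i-1) j \<in> {0, 1}" if "1 \<le> i" "i \<le> n" "j \<le> n" for i j
    using is_corner_sum_row_step[OF C, of "i-1" j] that by simp
  have col: "C i j - C i (j-1) \<in> {0, 1}" if "1 \<le> j" "i \<le> n" "j \<le> n" for i j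
    using is_corner_sum_col_step[OF C, of i "j-1"] that by simp
  note bd = is_corner_sum_boundary[OF C]
  show ?thesis
    unfolding is_asm_def
  proof (intro conjI ballI allI impI)
    fix i j assume "\<not> (1 \<le> i \<and> i \<le> n \<and> 1 \<le> j \<and> j \<le> n)"
    then show "from_csum n C i j = 0" by (auto simp: from_csum_def)
  next
    fix i j assume ij: "i \<in> {1..n}" "j \<in> {1..n}"
    then have "C i j - C i (j-1) \<in> {0, 1}" "C (i-1) j - C (i-1) (j-1) \<in> {0, 1}"
      using col[of j i] col[of j "i-1"] by auto
    then show "from_csum n C i j \<in> {- 1, 0, 1}"
      using ij by (auto simp: from_csum_def)
    show "(\<Sum>q = 1..j. from_csum n C i q) \<in> {0, 1}"
      using from_csum_row_sum[of i n j C] row[of i j] bd ij by auto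
    show "(\<Sum>p = 1..i. from_csum n C p j) \<in> {0, 1}"
      using from_csum_col_sum[of j i n C] col[of j i] bd ij by auto
  next
    fix i assume "i \<in> {1..n}"
    then show "(\<Sum>q = 1..n. from_csum n C i q) = 1" "(\<Sum>p = 1..n. from_csum n C p i) = 1"
      using from_csum_row_sum[of i n n C] from_csum_col_sum[of i n n C] bd by auto
  qed
qed

lemma from_csum_csum:
  assumes "is_asm n A"
  shows "from_csum n (csum A) = A"
proof (intro ext)
  fix p q
  show "from_csum n (csum A) p q = A p q"
  proof (cases "p \<in> {1..n} \<and> q \<in> {1..n}")
    case True
    then obtain p' q' where pq: "p = Suc p'" "q = Suc q'"
      by (metis atLeastAtMost_iff not0_implies_Suc not_one_le_zero)
    then show ?thesis
      using True by (simp add: from_csum_def csum_Suc_row sum.cl_ivl_Suc)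
  next
    case False
    then show ?thesis using asm_outside_zero[OF assms] by (auto simp: from_csum_def)
  qed
qed

lemma asm_eqI:
  assumes "is_asm n A" "is_asm n B" "\<forall>x\<le>n. \<forall>y\<le>n. csum A x y = csum B x y"
  shows "A = B"
proof -
  have "from_csum n (csum A) = from_csum n (csum B)"
    using assms(3) unfolding from_csum_def by (intro ext) auto
  then show ?thesis using from_csum_csum assms(1,2) by metis
qed

lemma is_corner_sum_row_growth:
  assumes "is_corner_sum n C" "x \<le> x'" "x' \<le> n" "y \<le> n"
  shows "C x y \<le> C x' y \<and> C x' y \<le> C x y + int (x' - x)"
  using assms(2,3)
proof (induction x' rule: dec_induct)
  case (step m)
  then have "C (Suc m) y - C m y \<in> {0, 1}"
    using is_corner_sum_row_step[OF assms(1), of m y] assms(4) by simp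
  then show ?case using step by (auto simp: Suc_diff_le)
qed simp

lemma is_corner_sum_col_growth:
  assumes "is_corner_sum n C" "y \<le> y'" "y' \<le> n" "x \<le> n"
  shows "C x y \<le> C x y' \<and> C x y' \<le> C x y + int (y' - y)"
  using assms(2,3)
proof (induction y' rule: dec_induct)
  case (step m)
  then have "C x (Suc m) - C x m \<in> {0, 1}"
    using is_corner_sum_col_step[OF assms(1), of x m] assms(4) by simp
  then show ?case using step by (auto simp: Suc_diff_le)
qed simp

lemma is_corner_sum_bounds:
  assumes "is_corner_sum n C" "x \<le> n" "y \<le> n"
  shows "0 \<le> C x y" "C x y \<le> int x" "C x y \<le> int y" "int x + int y - int n \<le> C x y"
proof -
  note bd = is_corner_sum_boundary[OF assms(1)]
  show "0 \<le> C x y" "C x y \<le> int x"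
    using is_corner_sum_row_growth[OF assms(1), of 0 x y] assms bd by auto
  show "C x y \<le> int y"
    using is_corner_sum_col_growth[OF assms(1), of 0 y x] assms bd by auto
  show "int x + int y - int n \<le> C x y"
    using is_corner_sum_row_growth[OF assms(1), of x n y] assms bd by auto
qed

lemma is_corner_sum_Lipschitz:
  assumes C: "is_corner_sum n C" and "x \<le> n" "y \<le> n" "p \<le> n" "q \<le> n"
  shows "C x y \<le> C p q + int (x - p) + int (y - q)"
proof -
  have "C x y \<le> C (max x p) y"
    using is_corner_sum_row_growth[OF C, of x "max x p" y] assms by auto
  also have "\<dots> \<le> C (max x p) (max y q)"
    using is_corner_sum_col_growth[OF C, of y "max y q" "max x p"] assms by auto
  also have "\<dots> \<le> C p (max y q) + int (max x p - p)"
    using is_corner_sum_row_growth[OF C, of p "max x p" "max y q"] assms by auto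
  also have "\<dots> \<le> C p q + int (max y q - q) + int (max x p - p)"
    using is_corner_sum_col_growth[OF C, of q "max y q" p] assms by auto
  finally show ?thesis by (simp add: max_def split: if_splits)
qed

lemma beta_diff: "beta n B - beta n A = (\<Sum>i=1..n. \<Sum>j=1..n. csum A i j - csum B i j)"
  by (simp add: beta_def sum_subtractf)

lemma beta_mono:
  assumes "asm_le n A B"
  shows "beta n A \<le> beta n B"
proof -
  have "0 \<le> (\<Sum>i=1..n. \<Sum>j=1..n. csum A i j - csum B i j)"
    using assms by (auto simp: asm_le_def intro!: sum_nonneg)
  then show ?thesis using beta_diff[of n B A] by simp
qed

definition lowerable_at :: "(nat \<Rightarrow> nat \<Rightarrow> int) \<Rightarrow> nat \<Rightarrow> nat \<Rightarrow> bool" where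
  "lowerable_at C i k \<longleftrightarrow>
     C i k = C (i-1) k + 1 \<and> C i k = C i (k-1) + 1 \<and> C (Suc i) k = C i k \<and> C i (Suc k) = C i k"

lemma in_Estar_unit_square: "in_Estar A i (Suc i) k (Suc k) \<longleftrightarrow> lowerable_at (csum A) i k"
  by (auto simp: in_Estar_def lowerable_at_def)

lemma not_in_E_unit_square: "lowerable_at (csum A) i k \<Longrightarrow> \<not> in_E A i (Suc i) k (Suc k)"
  by (simp add: in_E_def lowerable_at_def)

text \<open>Otherwise the neighbouring cell across a wrong unit step would also have \<open>CB < CA\<close>,
  with a larger value of \<open>2 CA(x,y) - x - y\<close>.\<close>
lemma lowerable_at_if_maximal:
  assumes VA: "is_corner_sum n CA" and VB: "is_corner_sum n CB"
    and i: "1 \<le> i" "i < n" and k: "1 \<le> k" "k < n" and lt: "CB i k < CA i k"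
    and max: "\<And>x y. x \<le> n \<Longrightarrow> y \<le> n \<Longrightarrow> CB x y < CA x y \<Longrightarrow>
      2 * CA x y - int x - int y \<le> 2 * CA i k - int i - int k"
  shows "lowerable_at CA i k"
  unfolding lowerable_at_def
proof (intro conjI; rule ccontr)
  assume "CA i k \<noteq> CA (i-1) k + 1"
  then have "CA (i-1) k = CA i k"
    using is_corner_sum_row_step[OF VA, of "i-1" k] i k by auto
  moreover have "CB (i-1) k \<le> CB i k"
    using is_corner_sum_row_growth[OF VB, of "i-1" i k] i k by simp
  moreover have "i - 1 \<le> n" using i by simp
  ultimately show False using max[of "i-1" k] i k lt by (simp add: of_nat_diff)
next
  assume "CA i k \<noteq> CA i (k-1) + 1"
  then have "CA i (k-1) = CA i k"
    using is_corner_sum_col_step[OF VA, of i "k-1"] i k by auto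
  moreover have "CB i (k-1) \<le> CB i k"
    using is_corner_sum_col_growth[OF VB, of "k-1" k i] i k by simp
  moreover have "k - 1 \<le> n" using k by simp
  ultimately show False using max[of i "k-1"] i k lt by (simp add: of_nat_diff)
next
  assume "CA (Suc i) k \<noteq> CA i k"
  then have "CA (Suc i) k = CA i k + 1"
    using is_corner_sum_row_step[OF VA, of i k] i k by auto
  moreover have "CB (Suc i) k \<le> CB i k + 1"
    using is_corner_sum_row_growth[OF VB, of i "Suc i" k] i k by simp
  ultimately show False using max[of "Suc i" k] i k lt by simp
next
  assume "CA i (Suc k) \<noteq> CA i k"
  then have "CA i (Suc k) = CA i k + 1"
    using is_corner_sum_col_step[OF VA, of i k] i k by auto
  moreover have "CB i (Suc k) \<le> CB i k + 1"
    using is_corner_sum_col_growth[OF VB, of k "Suc k" i] i k by simp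
  ultimately show False using max[of i "Suc k"] i k lt by simp
qed

lemma is_corner_sum_lowerable_cell:
  assumes VA: "is_corner_sum n CA" and VB: "is_corner_sum n CB"
    and lt: "x0 \<le> n" "y0 \<le> n" "CB x0 y0 < CA x0 y0"
  obtains i k where "1 \<le> i" "i < n" "1 \<le> k" "k < n" "CB i k < CA i k" "lowerable_at CA i k"
proof -
  define S where "S = {(x, y). x \<le> n \<and> y \<le> n \<and> CB x y < CA x y}"
  define pot where "pot = (\<lambda>(x, y). 2 * CA x y - int x - int y)"
  have fin: "finite S"
    unfolding S_def by (rule finite_subset[of _ "{0..n} \<times> {0..n}"]) auto
  moreover have "(x0, y0) \<in> S" using lt by (simp add: S_def)
  ultimately have "Max (pot ` S) \<in> pot ` S" by (intro Max_in) auto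
  then obtain i k where "(i, k) \<in> S" and ik_max: "pot (i, k) = Max (pot ` S)" by auto
  then have ik: "i \<le> n" "k \<le> n" "CB i k < CA i k" by (auto simp: S_def)
  have max: "2 * CA x y - int x - int y \<le> 2 * CA i k - int i - int k"
    if "x \<le> n" "y \<le> n" "CB x y < CA x y" for x y
  proof -
    have "(x, y) \<in> S" using that by (simp add: S_def)
    then have "pot (x, y) \<le> pot (i, k)" using fin ik_max by simp
    then show ?thesis by (simp add: pot_def)
  qed
  note bdA = is_corner_sum_boundary[OF VA] and bdB = is_corner_sum_boundary[OF VB]
  have i: "1 \<le> i" "i < n" and k: "1 \<le> k" "k < n"
    using ik bdA bdB by (metis less_irrefl less_one linorder_neqE_nat not_le)+
  then show ?thesis
    using that ik lowerable_at_if_maximal[OF VA VB i k ik(3) max] by blast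
qed

lemma rect_unit_square: "rect i (Suc i) k (Suc k) p q = (if p = i \<and> q = k then 1 else 0)"
  by (auto simp: rect_def)

lemma sum_rect_unit_square:
  assumes "i \<in> {1..n}" "k \<in> {1..n}"
  shows "(\<Sum>p=1..n. \<Sum>q=1..n. rect i (Suc i) k (Suc k) p q) = 1"
proof -
  have "(\<Sum>p=1..n. \<Sum>q=1..n. rect i (Suc i) k (Suc k) p q) = (\<Sum>p=1..n. if p = i then 1 else 0)"
    using assms by (intro sum.cong) (auto simp: rect_unit_square sum.delta)
  then show ?thesis using assms by (simp add: sum.delta)
qed

lemma is_corner_sum_lower:
  assumes C: "is_corner_sum n C" and i: "1 \<le> i" "i < n" and k: "1 \<le> k" "k < n"
    and low: "lowerable_at C i k"
  shows "is_corner_sum n (\<lambda>p q. C p q - rect i (Suc i) k (Suc k) p q)"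
  unfolding is_corner_sum_def rect_unit_square
proof (intro conjI allI impI)
  fix j assume "j \<le> n"
  then show "C 0 j - (if 0 = i \<and> j = k then 1 else 0) = 0"
    "C j 0 - (if j = i \<and> 0 = k then 1 else 0) = 0"
    "C n j - (if n = i \<and> j = k then 1 else 0) = int j"
    "C j n - (if j = i \<and> n = k then 1 else 0) = int j"
    using is_corner_sum_boundary[OF C] i k by auto
next
  fix x y assume "x < n" "y \<le> n"
  then show "C (Suc x) y - (if Suc x = i \<and> y = k then 1 else 0)
      - (C x y - (if x = i \<and> y = k then 1 else 0)) \<in> {0, 1}"
    using is_corner_sum_row_step[OF C, of x y] low by (auto simp: lowerable_at_def)
next
  fix x y assume "x \<le> n" "y < n"
  then show "C x (Suc y) - (if x = i \<and> Suc y = k then 1 else 0)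
      - (C x y - (if x = i \<and> y = k then 1 else 0)) \<in> {0, 1}"
    using is_corner_sum_col_step[OF C, of x y] low by (auto simp: lowerable_at_def)
qed

lemma asm_edge_towards:
  assumes A: "is_asm n A" and B: "is_asm n B" and le: "asm_le n A B" and ne: "A \<noteq> B"
  obtains A' where "asm_edge n A A'" "beta n A' = beta n A + 1" "asm_le n A' B"
proof -
  have VA: "is_corner_sum n (csum A)" and VB: "is_corner_sum n (csum B)"
    using A B by (simp_all add: is_corner_sum_csum)
  have lee: "\<forall>x\<le>n. \<forall>y\<le>n. csum B x y \<le> csum A x y"
    using le by (auto simp: asm_le_def)
  have "\<exists>x\<le>n. \<exists>y\<le>n. csum A x y \<noteq> csum B x y"
    using asm_eqI[OF A B] ne by blast
  then obtain x0 y0 where x0: "x0 \<le> n" "y0 \<le> n" "csum B x0 y0 < csum A x0 y0"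
    using lee by force
  obtain i k where ik: "1 \<le> i" "i < n" "1 \<le> k" "k < n" "csum B i k < csum A i k"
    and low: "lowerable_at (csum A) i k"
    using is_corner_sum_lowerable_cell[OF VA VB x0] by blast
  define C' where "C' = (\<lambda>p q. csum A p q - rect i (Suc i) k (Suc k) p q)"
  have V': "is_corner_sum n C'"
    unfolding C'_def using is_corner_sum_lower[OF VA ik(1-4) low] .
  define A' where "A' = from_csum n C'"
  have A': "is_asm n A'"
    unfolding A'_def using is_asm_from_csum[OF V'] .
  have csum_A': "csum A' x y = C' x y" if "x \<le> n" "y \<le> n" for x y
    unfolding A'_def using csum_from_csum[OF V' that] .
  have "A' = r_move n i (Suc i) k (Suc k) A"
    using low unfolding A'_def C'_def r_move_def in_Estar_unit_square
    by (simp add: not_in_E_unit_square)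
  then have "\<exists>i j k l. 1 \<le> i \<and> i < j \<and> j \<le> n \<and> 1 \<le> k \<and> k < l \<and> l \<le> n \<and>
      A' = r_move n i j k l A"
    using ik by (intro exI[of _ i] exI[of _ "Suc i"] exI[of _ k] exI[of _ "Suc k"]) simp
  moreover have "beta n A' - beta n A = (\<Sum>p=1..n. \<Sum>q=1..n. rect i (Suc i) k (Suc k) p q)"
    unfolding beta_diff using csum_A' by (intro sum.cong) (auto simp: C'_def)
  moreover have "(\<Sum>p=1..n. \<Sum>q=1..n. rect i (Suc i) k (Suc k) p q) = 1"
    using ik by (intro sum_rect_unit_square) auto
  ultimately have "asm_edge n A A'" "beta n A' = beta n A + 1"
    using A A' by (simp_all add: asm_edge_def)
  moreover have "asm_le n A' B"
    unfolding asm_le_def using csum_A' lee ik by (auto simp: C'_def rect_unit_square)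
  ultimately show ?thesis using that by blast
qed

definition saturated_path :: "nat \<Rightarrow> (nat \<Rightarrow> nat \<Rightarrow> int) list \<Rightarrow> bool" where
  "saturated_path n xs \<longleftrightarrow> (\<forall>t. Suc t < length xs \<longrightarrow>
     asm_edge n (xs ! t) (xs ! Suc t) \<and> beta n (xs ! Suc t) - beta n (xs ! t) = 1)"

lemma saturated_path_singleton: "saturated_path n [A]"
  by (simp add: saturated_path_def)

lemma saturated_path_Cons:
  assumes "xs \<noteq> []" "asm_edge n A (hd xs)" "beta n (hd xs) = beta n A + 1" "saturated_path n xs"
  shows "saturated_path n (A # xs)"
  using assms by (auto simp: saturated_path_def hd_conv_nth nth_Cons split: nat.split)

lemma asm_le_saturated_path:
  assumes "is_asm n A" "is_asm n B" "asm_le n A B"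
  shows "\<exists>xs. xs \<noteq> [] \<and> hd xs = A \<and> last xs = B \<and> saturated_path n xs"
  using assms
proof (induction "nat (beta n B - beta n A)" arbitrary: A rule: less_induct)
  case less
  show ?case
  proof (cases "A = B")
    case True
    then show ?thesis using saturated_path_singleton by fastforce
  next
    case False
    then obtain A' where A': "asm_edge n A A'" "beta n A' = beta n A + 1" "asm_le n A' B"
      using asm_edge_towards less.prems by blast
    moreover have "nat (beta n B - beta n A') < nat (beta n B - beta n A)"
      using beta_mono[OF A'(3)] A'(2) by simp
    ultimately obtain xs where "xs \<noteq> []" "hd xs = A'" "last xs = B" "saturated_path n xs"
      using less.hyps less.prems(2) A'(1) unfolding asm_edge_def by blast
    then show ?thesis
      using A' saturated_path_Cons by (intro exI[of _ "A # xs"]) auto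
  qed
qed

text \<open>\<open>bigrass_perm p q c\<close> fixes \<open>1..c\<close> and everything beyond \<open>p + q - c\<close>, and swaps the
  adjacent blocks \<open>c+1..p\<close> and \<open>p+1..p+q-c\<close>.\<close>
definition bigrass_perm :: "nat \<Rightarrow> nat \<Rightarrow> nat \<Rightarrow> nat \<Rightarrow> nat" where
  "bigrass_perm p q c x =
     (if x \<le> c then x else if x \<le> p then x + q - c else if x \<le> p + q - c then x + c - p else x)"

lemma bigrass_perm_inverse: "c < p \<Longrightarrow> c < q \<Longrightarrow> bigrass_perm q p c (bigrass_perm p q c x) = x"
  unfolding bigrass_perm_def by auto

lemma bigrass_perm_permutes:
  assumes "c < p" "c < q" "p + q \<le> n + c"
  shows "bigrass_perm p q c permutes {1..n}"
  unfolding permutes_def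
proof (intro conjI allI impI)
  fix x assume "x \<notin> {1..n}"
  then show "bigrass_perm p q c x = x" using assms by (auto simp: bigrass_perm_def)
next
  fix y
  show "\<exists>!x. bigrass_perm p q c x = y"
    using bigrass_perm_inverse[of c p q] bigrass_perm_inverse[of c q p] assms by metis
qed

lemma inv_bigrass_perm: "c < p \<Longrightarrow> c < q \<Longrightarrow> inv (bigrass_perm p q c) = bigrass_perm q p c"
  by (rule inv_equality) (simp_all add: bigrass_perm_inverse)

lemma bigrass_perm_descents:
  assumes "c < p" "c < q" "p + q \<le> n + c"
  shows "{j\<in>{1..n-1}. bigrass_perm p q c j > bigrass_perm p q c (j+1)} = {p}"
  using assms unfolding bigrass_perm_def by (auto split: if_splits)

lemma bigrassmannian_bigrass_perm:
  assumes "c < p" "c < q" "p + q \<le> n + c"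
  shows "bigrassmannian n (bigrass_perm p q c)"
  unfolding bigrassmannian_def inv_bigrass_perm[OF assms(1,2)]
  using bigrass_perm_descents[OF assms] bigrass_perm_descents[of c q p n] assms
  by (simp add: add.commute)

lemma bigrass_perm_eqD:
  assumes "c < p" "c < q" "p + q \<le> n + c" "c' < p'" "c' < q'" "p' + q' \<le> n + c'"
    and eq: "\<forall>x\<in>{1..n}. bigrass_perm p q c x = bigrass_perm p' q' c' x"
  shows "p = p'" "q = q'" "c = c'"
proof -
  have "{j\<in>{1..n-1}. bigrass_perm p q c j > bigrass_perm p q c (j+1)}
      = {j\<in>{1..n-1}. bigrass_perm p' q' c' j > bigrass_perm p' q' c' (j+1)}"
    using eq by force
  then show p: "p = p'" using bigrass_perm_descents assms by simp
  have "Suc p \<in> {1..n}" "p \<in> {1..n}" using assms by auto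
  then have "bigrass_perm p q c (Suc p) = bigrass_perm p' q' c' (Suc p)"
    "bigrass_perm p q c p = bigrass_perm p' q' c' p"
    using eq by blast+
  then show "c = c'" "q = q'"
    using p assms(1-6) by (auto simp: bigrass_perm_def split: if_splits)
qed

lemma perm_matrix_row_sum:
  assumes "w permutes {1..n}" "i \<in> {1..n}"
  shows "(\<Sum>q=1..j. perm_matrix n w i q) = (if w i \<le> j then 1 else 0)"
proof -
  have "w i \<in> {1..n}" using permutes_in_image[OF assms(1)] assms(2) by simp
  then have "(\<Sum>q=1..j. perm_matrix n w i q) = (\<Sum>q\<in>{1..j}. if w i = q then 1 else 0)"
    using assms(2) by (intro sum.cong) (auto simp: perm_matrix_def)
  then show ?thesis using \<open>w i \<in> {1..n}\<close> by (simp add: sum.delta)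
qed

lemma perm_matrix_transpose:
  "w permutes {1..n} \<Longrightarrow> perm_matrix n w j i = perm_matrix n (inv w) i j"
  unfolding perm_matrix_def by (simp add: permutes_inv_eq)

lemma is_asm_perm_matrix:
  assumes w: "w permutes {1..n}"
  shows "is_asm n (perm_matrix n w)"
proof -
  have col: "(\<Sum>p=1..i. perm_matrix n w p j) = (if inv w j \<le> i then 1 else 0)"
    if "j \<in> {1..n}" for i j
  proof -
    have "(\<Sum>p=1..i. perm_matrix n w p j) = (\<Sum>p=1..i. perm_matrix n (inv w) j p)"
      by (rule sum.cong[OF refl], rule perm_matrix_transpose[OF w])
    then show ?thesis using perm_matrix_row_sum[OF permutes_inv[OF w] that] by simp
  qed
  have range: "w i \<in> {1..n}" "inv w i \<in> {1..n}" if "i \<in> {1..n}" for i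
    using that permutes_in_image[OF w] permutes_in_image[OF permutes_inv[OF w]] by simp_all
  show ?thesis
    unfolding is_asm_def
  proof (intro conjI ballI allI impI)
    fix i j assume "\<not> (1 \<le> i \<and> i \<le> n \<and> 1 \<le> j \<and> j \<le> n)"
    then show "perm_matrix n w i j = 0" by (auto simp: perm_matrix_def)
  next
    fix i j assume i: "i \<in> {1..n}" and j: "j \<in> {1..n}"
    show "perm_matrix n w i j \<in> {- 1, 0, 1}" by (simp add: perm_matrix_def)
    show "(\<Sum>q = 1..j. perm_matrix n w i q) \<in> {0, 1}"
      using perm_matrix_row_sum[OF w i, of j] by simp
    show "(\<Sum>p = 1..i. perm_matrix n w p j) \<in> {0, 1}"
      using col[OF j, of i] by simp
  next
    fix i assume i: "i \<in> {1..n}"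
    show "(\<Sum>q = 1..n. perm_matrix n w i q) = 1"
      using perm_matrix_row_sum[OF w i, of n] range[OF i] by simp
    show "(\<Sum>p = 1..n. perm_matrix n w p i) = 1"
      using col[OF i, of n] range[OF i] by simp
  qed
qed

lemma perm_matrix_cong: "\<forall>x\<in>{1..n}. w x = w' x \<Longrightarrow> perm_matrix n w = perm_matrix n w'"
  by (intro ext) (auto simp: perm_matrix_def)

lemma perm_matrix_eqD:
  assumes w: "w permutes {1..n}" and eq: "perm_matrix n w = perm_matrix n w'" and x: "x \<in> {1..n}"
  shows "w x = w' x"
proof -
  have "w x \<in> {1..n}" using permutes_in_image[OF w] x by simp
  then have "perm_matrix n w x (w x) = 1" using x by (simp add: perm_matrix_def)
  then have "perm_matrix n w' x (w x) = 1" using eq by simp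
  then show ?thesis by (simp add: perm_matrix_def split: if_splits)
qed

lemma csum_perm_matrix_Suc:
  assumes "w permutes {1..n}" "Suc x \<le> n"
  shows "csum (perm_matrix n w) (Suc x) y
    = csum (perm_matrix n w) x y + (if w (Suc x) \<le> y then 1 else 0)"
  using perm_matrix_row_sum[OF assms(1), of "Suc x" y] assms(2) by (simp add: csum_Suc_row)

lemma csum_bigrass_perm:
  assumes "c < p" "c < q" "p + q \<le> n + c" "x \<le> n"
  shows "csum (perm_matrix n (bigrass_perm p q c)) x y
    = min (int x) (min (int y) (int c + int (x - p) + int (y - q)))"
  using assms(4)
proof (induction x)
  case (Suc x)
  have step: "min (int x) (min (int y) (int c + int (x - p) + int (y - q)))
        + (if bigrass_perm p q c (Suc x) \<le> y then 1 else 0)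
      = min (int (Suc x)) (min (int y) (int c + int (Suc x - p) + int (y - q)))"
    using assms(1,2) unfolding bigrass_perm_def by (auto simp: min_def)
  have "csum (perm_matrix n (bigrass_perm p q c)) (Suc x) y
      = csum (perm_matrix n (bigrass_perm p q c)) x y + (if bigrass_perm p q c (Suc x) \<le> y then 1 else 0)"
    by (rule csum_perm_matrix_Suc[OF bigrass_perm_permutes[OF assms(1-3)] Suc.prems])
  also have "\<dots> = min (int (Suc x)) (min (int y) (int c + int (Suc x - p) + int (y - q)))"
    unfolding step[symmetric] using Suc by simp
  finally show ?case .
qed simp

lemma is_bigrass_perm_matrix_bigrass_perm:
  "c < p \<Longrightarrow> c < q \<Longrightarrow> p + q \<le> n + c \<Longrightarrow>
    is_bigrass_perm_matrix n (perm_matrix n (bigrass_perm p q c))"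
  unfolding is_bigrass_perm_matrix_def
  using bigrass_perm_permutes bigrassmannian_bigrass_perm by blast

lemma strict_mono_on_atLeastAtMost_SucI:
  fixes f :: "nat \<Rightarrow> 'a :: order"
  assumes "\<And>x. s \<le> x \<Longrightarrow> Suc x \<le> e \<Longrightarrow> f x < f (Suc x)"
  shows "strict_mono_on {s..e} f"
proof (rule strict_mono_onI)
  fix x y assume "x \<in> {s..e}" "y \<in> {s..e}" "x < y"
  then have "Suc x \<le> y" "y \<le> e" "s \<le> x" by auto
  then show "f x < f y"
  proof (induction y rule: dec_induct)
    case (step m)
    then show ?case using assms[of m] by (auto intro: order.strict_trans)
  qed (use assms in simp)
qed

lemma strict_mono_on_add_diff_le:
  fixes f :: "nat \<Rightarrow> nat"
  assumes "strict_mono_on {s..e} f" "s \<le> x" "x \<le> y" "y \<le> e"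
  shows "f x + (y - x) \<le> f y"
  using assms(3,4)
proof (induction y rule: dec_induct)
  case (step m)
  then have "f m < f (Suc m)" using strict_mono_onD[OF assms(1)] assms(2) by simp
  then show ?case using step by (simp add: Suc_diff_le)
qed simp

lemma single_descent:
  fixes f :: "nat \<Rightarrow> nat"
  assumes "card {j\<in>{1..n-1}. f j > f (j+1)} = 1" "inj f"
  obtains j where "1 \<le> j" "j < n" "f (Suc j) < f j"
    "strict_mono_on {1..j} f" "strict_mono_on {Suc j..n} f"
proof -
  obtain j where J: "{j\<in>{1..n-1}. f j > f (j+1)} = {j}"
    using assms(1) card_1_singletonE by blast
  have step: "f x < f (Suc x)" if "1 \<le> x" "Suc x \<le> n" "x \<noteq> j" for x
  proof -
    have "x \<notin> {j\<in>{1..n-1}. f j > f (j+1)}" using that(3) unfolding J by simp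
    then have "\<not> f (Suc x) < f x" using that(1,2) by simp
    moreover have "f x \<noteq> f (Suc x)" using injD[OF assms(2), of x "Suc x"] by auto
    ultimately show ?thesis by simp
  qed
  have "1 \<le> j" "j < n" "f (Suc j) < f j" using J by auto
  then show ?thesis
    using step by (intro that strict_mono_on_atLeastAtMost_SucI) auto
qed

locale bigrassmannian_descents =
  fixes n j v :: nat and w :: "nat \<Rightarrow> nat"
  assumes permutes: "w permutes {1..n}"
    and descent: "1 \<le> j" "j < n" "w (Suc j) < w j"
    and mono_upto_j: "strict_mono_on {1..j} w" and mono_from_j: "strict_mono_on {Suc j..n} w"
    and inv_descent: "1 \<le> v" "v < n"
    and inv_mono_upto_v: "strict_mono_on {1..v} (inv w)"
    and inv_mono_from_v: "strict_mono_on {Suc v..n} (inv w)"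
begin

lemma in_range: "x \<in> {1..n} \<Longrightarrow> w x \<in> {1..n}"
  using permutes_in_image[OF permutes] by simp

lemma inv_in_range: "x \<in> {1..n} \<Longrightarrow> inv w x \<in> {1..n}"
  using permutes_in_image[OF permutes_inv[OF permutes]] by simp

lemma w_inv [simp]: "w (inv w u) = u" and inv_w [simp]: "inv w (w x) = x"
  using permutes_inverses[OF permutes] by auto

lemma w_eq_iff [simp]: "w x = w y \<longleftrightarrow> x = y"
  using permutes_inj[OF permutes] by (auto dest: injD)

lemma le_w_upto_j: "1 \<le> x \<Longrightarrow> x \<le> j \<Longrightarrow> x \<le> w x"
  using strict_mono_on_add_diff_le[OF mono_upto_j order_refl, of x] in_range[of 1] descent by auto

lemma w_le_from_j: "Suc j \<le> x \<Longrightarrow> x \<le> n \<Longrightarrow> w x \<le> x"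
  using strict_mono_on_add_diff_le[OF mono_from_j, of x n] in_range[of n] descent by auto

lemma le_inv_upto_v: "1 \<le> u \<Longrightarrow> u \<le> v \<Longrightarrow> u \<le> inv w u"
  using strict_mono_on_add_diff_le[OF inv_mono_upto_v order_refl, of u] inv_in_range[of 1] inv_descent
  by auto

lemma inv_le_from_v: "Suc v \<le> u \<Longrightarrow> u \<le> n \<Longrightarrow> inv w u \<le> u"
  using strict_mono_on_add_diff_le[OF inv_mono_from_v, of u n] inv_in_range[of n] inv_descent by auto

lemma fixed_upto_j: "1 \<le> x \<Longrightarrow> x \<le> j \<Longrightarrow> w x \<le> v \<Longrightarrow> w x = x"
  using le_w_upto_j[of x] le_inv_upto_v[of "w x"] in_range[of x] descent by auto

lemma fixed_from_j: "Suc j \<le> x \<Longrightarrow> x \<le> n \<Longrightarrow> v < w x \<Longrightarrow> w x = x"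
  using w_le_from_j[of x] inv_le_from_v[of "w x"] in_range[of x] by auto

definition c :: nat where "c = w (Suc j) - 1"

lemma w_Suc_j: "w (Suc j) = c + 1"
  using in_range[of "Suc j"] descent unfolding c_def by auto

lemma inv_Suc_c: "inv w (c + 1) = Suc j"
  using inv_w[of "Suc j"] w_Suc_j by simp

lemma c_less_v: "c < v"
proof (rule ccontr)
  assume "\<not> c < v"
  then have "v < w (Suc j)" using w_Suc_j by simp
  then have fix_Suc_j: "w (Suc j) = Suc j" using fixed_from_j descent by simp
  have "j \<in> {1..n}" using descent by simp
  then have "Suc j < w j" "w j \<le> n" using in_range[of j] fix_Suc_j descent by auto
  then have "w (Suc j) < w (w j)" using strict_mono_onD[OF mono_from_j] by simp
  then have "w (w j) = w j"
    using fixed_from_j[of "w j"] \<open>v < w (Suc j)\<close> \<open>Suc j < w j\<close> \<open>w j \<le> n\<close> by simp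
  then show False using \<open>Suc j < w j\<close> by simp
qed

lemma inv_fixed_upto_v: "1 \<le> u \<Longrightarrow> u \<le> v \<Longrightarrow> inv w u \<le> j \<Longrightarrow> inv w u = u"
  using le_inv_upto_v[of u] le_w_upto_j[of "inv w u"] inv_in_range[of u] inv_descent by auto

lemma fixed_upto_c: "1 \<le> x \<Longrightarrow> x \<le> c \<Longrightarrow> w x = x"
proof -
  assume x: "1 \<le> x" "x \<le> c"
  then have "inv w x < Suc j"
    using strict_mono_onD[OF inv_mono_upto_v, of x "c + 1"] c_less_v inv_Suc_c by simp
  then have "inv w x = x" using inv_fixed_upto_v x c_less_v by simp
  then show "w x = x" using w_inv[of x] by simp
qed

lemma c_less_j: "c < j"
proof (rule ccontr)
  assume "\<not> c < j"
  then have "w j = j" using fixed_upto_c descent by simp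
  then show False using descent w_Suc_j \<open>\<not> c < j\<close> by simp
qed

lemma v_less_w_Suc_c: "v < w (c + 1)"
proof (rule ccontr)
  assume "\<not> v < w (c + 1)"
  then have "w (c + 1) = w (Suc j)" using fixed_upto_j[of "c + 1"] c_less_j w_Suc_j by simp
  then show False using c_less_j by simp
qed

lemma Suc_c_le_inv_Suc_v: "c + 1 \<le> inv w (v + 1)"
proof (rule ccontr)
  assume "\<not> c + 1 \<le> inv w (v + 1)"
  moreover have "1 \<le> inv w (v + 1)" using inv_in_range[of "v + 1"] inv_descent by simp
  ultimately have "w (inv w (v + 1)) = inv w (v + 1)" by (intro fixed_upto_c) simp_all
  then show False using \<open>\<not> c + 1 \<le> inv w (v + 1)\<close> c_less_v by simp
qed

lemma w_j_le: "w j \<le> v + j - c"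
proof -
  have "w (c + 1) \<le> w j"
    using strict_mono_on_leD[OF mono_upto_j, of "c + 1" j] c_less_j by simp
  moreover have "w j \<le> n" using in_range[of j] descent by simp
  ultimately have "inv w (Suc v) + (w j - Suc v) \<le> inv w (w j)"
    using strict_mono_on_add_diff_le[OF inv_mono_from_v order_refl, of "w j"] v_less_w_Suc_c by simp
  then show ?thesis using Suc_c_le_inv_Suc_v c_less_j by simp
qed

lemma w_first_block: "c + 1 \<le> x \<Longrightarrow> x \<le> j \<Longrightarrow> w x = x + v - c"
  using strict_mono_on_add_diff_le[OF mono_upto_j, of "c + 1" x] strict_mono_on_add_diff_le[OF mono_upto_j, of x j]
    v_less_w_Suc_c w_j_le c_less_j by simp

lemma second_block_end: "j + v - c \<le> inv w v" "j + v - c \<le> n"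
proof -
  show "j + v - c \<le> inv w v"
    using strict_mono_on_add_diff_le[OF inv_mono_upto_v, of "c + 1" v] c_less_v inv_Suc_c by simp
  then show "j + v - c \<le> n" using inv_in_range[of v] inv_descent by simp
qed

lemma w_second_block: "Suc j \<le> x \<Longrightarrow> x \<le> j + v - c \<Longrightarrow> w x = x + c - j"
  using strict_mono_on_add_diff_le[OF mono_from_j, of "Suc j" x]
    strict_mono_on_add_diff_le[OF mono_from_j, of x "inv w v"] second_block_end
    inv_in_range[of v] inv_descent w_Suc_j c_less_j by simp

lemma fixed_after_blocks: "j + v - c < x \<Longrightarrow> x \<le> n \<Longrightarrow> w x = x"
proof -
  assume x: "j + v - c < x" "x \<le> n"
  have "w (j + v - c) + (x - (j + v - c)) \<le> w x"
    using strict_mono_on_add_diff_le[OF mono_from_j, of "j + v - c" x] x c_less_v by simp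
  moreover have "w (j + v - c) = v" using w_second_block[of "j + v - c"] c_less_v c_less_j by simp
  ultimately show "w x = x" using fixed_from_j x c_less_v by simp
qed

lemma eq_bigrass_perm: "x \<in> {1..n} \<Longrightarrow> w x = bigrass_perm j v c x"
  unfolding bigrass_perm_def
  using fixed_upto_c[of x] w_first_block[of x] w_second_block[of x] fixed_after_blocks[of x]
  by auto

end

lemma bigrassmannian_obtains_bigrass_perm:
  assumes w: "w permutes {1..n}" and "bigrassmannian n w"
  obtains p q c where "c < p" "c < q" "p + q \<le> n + c" "\<forall>x\<in>{1..n}. w x = bigrass_perm p q c x"
proof -
  obtain j where "1 \<le> j" "j < n" "w (Suc j) < w j"
      "strict_mono_on {1..j} w" "strict_mono_on {Suc j..n} w"
    using single_descent[of n w] assms permutes_inj[OF w] unfolding bigrassmannian_def by blast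
  moreover obtain v where "1 \<le> v" "v < n"
      "strict_mono_on {1..v} (inv w)" "strict_mono_on {Suc v..n} (inv w)"
    using single_descent[of n "inv w"] assms permutes_inj[OF permutes_inv[OF w]]
    unfolding bigrassmannian_def by blast
  ultimately interpret bigrassmannian_descents n j v w
    using w by unfold_locales
  show ?thesis
    using that[of c j v] c_less_j c_less_v second_block_end(2) eq_bigrass_perm by simp
qed

text \<open>By the bounds and the Lipschitz property of corner sums, the corner sum matrix of
  \<open>bigrass_perm p q c\<close> is the pointwise largest one whose value at \<open>(p, q)\<close> is at most \<open>c\<close>.\<close>
lemma bigrass_perm_matrix_le_iff:
  assumes A: "is_asm n A" and pqc: "c < p" "c < q" "p + q \<le> n + c"
  shows "asm_le n (perm_matrix n (bigrass_perm p q c)) A \<longleftrightarrow> csum A p q \<le> int c"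
proof
  assume "asm_le n (perm_matrix n (bigrass_perm p q c)) A"
  then have "csum A p q \<le> csum (perm_matrix n (bigrass_perm p q c)) p q"
    using pqc by (simp add: asm_le_def)
  also have "\<dots> = int c" using csum_bigrass_perm[OF pqc, of p q] pqc by simp
  finally show "csum A p q \<le> int c" .
next
  assume le: "csum A p q \<le> int c"
  have VA: "is_corner_sum n (csum A)" using is_corner_sum_csum[OF A] .
  show "asm_le n (perm_matrix n (bigrass_perm p q c)) A"
    unfolding asm_le_def
  proof (intro ballI)
    fix x y assume "x \<in> {0..n}" "y \<in> {0..n}"
    then show "csum A x y \<le> csum (perm_matrix n (bigrass_perm p q c)) x y"
      using csum_bigrass_perm[OF pqc, of x y] is_corner_sum_bounds[OF VA, of x y]
        is_corner_sum_Lipschitz[OF VA, of x y p q] le pqc by simp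
  qed
qed

definition bigrass_params :: "nat \<Rightarrow> (nat \<Rightarrow> nat \<Rightarrow> int) \<Rightarrow> (nat \<times> nat \<times> nat) set" where
  "bigrass_params n A = {(p, q, c). c < p \<and> c < q \<and> p + q \<le> n + c \<and> csum A p q \<le> int c}"

lemma bigrass_below_eq_image:
  assumes A: "is_asm n A"
  shows "{B. is_asm n B \<and> asm_le n B A \<and> is_bigrass_perm_matrix n B}
    = (\<lambda>(p, q, c). perm_matrix n (bigrass_perm p q c)) ` bigrass_params n A"
proof (intro equalityI subsetI)
  fix B assume "B \<in> {B. is_asm n B \<and> asm_le n B A \<and> is_bigrass_perm_matrix n B}"
  then obtain w where B: "asm_le n B A" "w permutes {1..n}" "bigrassmannian n w" "B = perm_matrix n w"
    unfolding is_bigrass_perm_matrix_def by blast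
  then obtain p q c where pqc: "c < p" "c < q" "p + q \<le> n + c"
      and "\<forall>x\<in>{1..n}. w x = bigrass_perm p q c x"
    using bigrassmannian_obtains_bigrass_perm by metis
  then have "B = perm_matrix n (bigrass_perm p q c)" using B(4) perm_matrix_cong by blast
  moreover have "(p, q, c) \<in> bigrass_params n A"
    using bigrass_perm_matrix_le_iff[OF A pqc] B(1) pqc calculation by (simp add: bigrass_params_def)
  ultimately show "B \<in> (\<lambda>(p, q, c). perm_matrix n (bigrass_perm p q c)) ` bigrass_params n A"
    by force
next
  fix B assume "B \<in> (\<lambda>(p, q, c). perm_matrix n (bigrass_perm p q c)) ` bigrass_params n A"
  then obtain p q c where "c < p" "c < q" "p + q \<le> n + c" "csum A p q \<le> int c"
      and "B = perm_matrix n (bigrass_perm p q c)"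
    unfolding bigrass_params_def by auto
  then show "B \<in> {B. is_asm n B \<and> asm_le n B A \<and> is_bigrass_perm_matrix n B}"
    using is_asm_perm_matrix[OF bigrass_perm_permutes] bigrass_perm_matrix_le_iff[OF A]
      is_bigrass_perm_matrix_bigrass_perm by simp
qed

lemma inj_on_bigrass_params:
  "inj_on (\<lambda>(p, q, c). perm_matrix n (bigrass_perm p q c)) (bigrass_params n A)"
proof -
  have "(p, q, c) = (p', q', c')"
    if "(p, q, c) \<in> bigrass_params n A" "(p', q', c') \<in> bigrass_params n A"
      and eq: "perm_matrix n (bigrass_perm p q c) = perm_matrix n (bigrass_perm p' q' c')"
    for p q c p' q' c'
  proof -
    have pqc: "c < p" "c < q" "p + q \<le> n + c" "c' < p'" "c' < q'" "p' + q' \<le> n + c'"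
      using that(1,2) by (simp_all add: bigrass_params_def)
    then have "\<forall>x\<in>{1..n}. bigrass_perm p q c x = bigrass_perm p' q' c' x"
      using perm_matrix_eqD[OF bigrass_perm_permutes[OF pqc(1-3)] eq] by blast
    then show ?thesis using bigrass_perm_eqD[OF pqc] by simp
  qed
  then show ?thesis by (auto simp: inj_on_def)
qed

lemma bigrass_params_eq_Sigma:
  assumes "is_asm n A"
  shows "bigrass_params n A = (SIGMA p:{1..n}. SIGMA q:{1..n}. {nat (csum A p q)..<min p q})"
  using is_corner_sum_bounds[OF is_corner_sum_csum[OF assms]]
  by (fastforce simp: bigrass_params_def)

lemma card_bigrass_params:
  assumes A: "is_asm n A"
  shows "int (card (bigrass_params n A)) = beta n A"
proof -
  have count: "int (min p q - nat (csum A p q)) = int (min p q) - csum A p q"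
    if "p \<in> {1..n}" "q \<in> {1..n}" for p q
    using is_corner_sum_bounds[OF is_corner_sum_csum[OF A], of p q] that by auto
  have "int (card (bigrass_params n A)) = (\<Sum>p=1..n. \<Sum>q=1..n. int (min p q - nat (csum A p q)))"
    unfolding bigrass_params_eq_Sigma[OF A] by (simp add: card_SigmaI)
  also have "\<dots> = (\<Sum>p=1..n. \<Sum>q=1..n. int (min p q) - csum A p q)"
    using count by (intro sum.cong refl) simp
  finally show ?thesis by (simp add: beta_def sum_subtractf)
qed

lemma beta_eq_card_bigrass_below:
  assumes "is_asm n A"
  shows "beta n A = int (card {B. is_asm n B \<and> asm_le n B A \<and> is_bigrass_perm_matrix n B})"
  using card_bigrass_params[OF assms] card_image[OF inj_on_bigrass_params]
  unfolding bigrass_below_eq_image[OF assms] by simp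

theorem mainTheorem9:
  fixes n :: nat
  shows "(\<forall>A B. is_asm n A \<and> is_asm n B \<and> asm_le n A B \<longrightarrow>
            (\<exists>xs. xs \<noteq> [] \<and> hd xs = A \<and> last xs = B \<and>
               (\<forall>t. Suc t < length xs \<longrightarrow>
                  asm_edge n (xs ! t) (xs ! Suc t) \<and>
                  beta n (xs ! Suc t) - beta n (xs ! t) = 1))) \<and>
         (\<forall>A. is_asm n A \<longrightarrow>
            beta n A = int (card {B. is_asm n B \<and> asm_le n B A \<and> is_bigrass_perm_matrix n B}))"
  using asm_le_saturated_path[of n] beta_eq_card_bigrass_below[of n]
  unfolding saturated_path_def by blast

end
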